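(* For $n\in\mathbb{N}$, let $G_n$ be the sink parity game with player 0 vertices $a_1,\dots,a_n$, player 1 vertices $b_1,\dots,b_{n+1}$ and sink $\top$, with priorities $\pi(a_i)=2i+1$ and $\pi(b_i)=2i+2$, and write $a_{n+1}:=\top$. For every $i\in[n]$, $a_i$ has an edge to $a_{i+1}$ with Bland number $2i-1$ and an edge to $b_{i+1}$ with Bland number $2i$, and $b_i$ has edges to $b_{i+1}$ and to $a_{i+1}$; $b_{n+1}$ has a single edge to $\top$, and $\top$ has its self-loop. Let $\sigma_0$ be the player 0 strategy with $\sigma_0(a_i)=a_{i+1}$ for all $i\in[n]$. Then strategy improvement with Bland's rule, started at $\sigma_0$, takes $2^n-1$ iterations to solve $G_n$. Moreover, the order of the valuations of $a_1$ and $b_1$ changes in every iteration (i.e. between any two consecutive strategies of the run, which of $\mathrm{val}(a_1)$, $\mathrm{val}(b_1)$ is larger with respect to $\triangleleft$ switches).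
   Context: A sink parity game is a tuple $(V_0,V_1,E,\pi)$ specifying a directed graph on $V_G=V_0\cup V_1\cup\{\top\}$ in which every vertex has an outgoing edge, the sink $\top$ has only the self-loop as outgoing edge, and $\pi:V_G\to\mathbb{Z}\cup\{-\infty\}$ is a priority function with $\pi(\top)=-\infty$ (only at $\top$). Player $i$ owns $V_i$; player 0 edges are edges leaving $V_0$. A player-$i$ strategy is a map $\sigma:V_i\to V_G$ along edges; $E_\sigma$ consists of the edges $(v,\sigma(v))$, $v\in V_i$, and all edges leaving vertices not in $V_i$. A player 0 strategy is admissible if every cycle of $E_\sigma$ not containing $\top$ has even highest priority. For finite multisets $S_1,S_2$ of integers, $S_1\triangleleft S_2$ means $\sum_{s\in S_1}(-|V_0\cup V_1|)^s<\sum_{s\in S_2}(-|V_0\cup V_1|)^s$ (with multiplicity). For admissible $\sigma$, with $\bar\sigma$ an optimal (valuation-minimizing) counterstrategy of player 1, the play from $v_0$ is a simple path $v_0,\dots,v_k,\top$ and $\mathrm{val}_\sigma(v_0)=\{\pi(v_0),\dots,\pi(v_k)\}$ (multiset). A player 0 edge $(v,w)$ is an improving switch for $\sigma$ if $\mathrm{val}_\sigma(w)\triangleright\mathrm{val}_\sigma(\sigma(v))$; applying it redirects $v$ to $w$. Strategy improvement repeatedly applies one improving switch until none exists (optimal strategy); each application is one iteration. Bland's rule applies the improving switch with the smallest Bland number. *)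

theory Defs
  imports Complex_Main "HOL-Library.Multiset"
begin

record 'v spg =
  V0 :: "'v set"
  V1 :: "'v set"
  sink :: 'v
  edges :: "('v \<times> 'v) set"
  prio :: "'v \<Rightarrow> int"   (* the priority of the sink (-infinity) is never used *)

definition strategy0 :: "('v, 'm) spg_scheme \<Rightarrow> ('v \<Rightarrow> 'v) \<Rightarrow> bool" where
  "strategy0 G \<sigma> \<longleftrightarrow> (\<forall>v\<in>V0 G. (v, \<sigma> v) \<in> edges G)"

definition strategy1 :: "('v, 'm) spg_scheme \<Rightarrow> ('v \<Rightarrow> 'v) \<Rightarrow> bool" where
  "strategy1 G \<tau> \<longleftrightarrow> (\<forall>v\<in>V1 G. (v, \<tau> v) \<in> edges G)"

definition E_sigma :: "('v, 'm) spg_scheme \<Rightarrow> ('v \<Rightarrow> 'v) \<Rightarrow> ('v \<times> 'v) set" where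
  "E_sigma G \<sigma> = {(v, w) \<in> edges G. v \<in> V0 G \<longrightarrow> w = \<sigma> v}"

definition admissible :: "('v, 'm) spg_scheme \<Rightarrow> ('v \<Rightarrow> 'v) \<Rightarrow> bool" where
  "admissible G \<sigma> \<longleftrightarrow> strategy0 G \<sigma> \<and>
     (\<forall>xs. xs \<noteq> [] \<and> (\<forall>i<length xs. (xs ! i, xs ! (Suc i mod length xs)) \<in> E_sigma G \<sigma>)
            \<and> sink G \<notin> set xs \<longrightarrow> even (Max (prio G ` set xs)))"

definition step :: "('v, 'm) spg_scheme \<Rightarrow> ('v \<Rightarrow> 'v) \<Rightarrow> ('v \<Rightarrow> 'v) \<Rightarrow> 'v \<Rightarrow> 'v" where
  "step G \<sigma> \<tau> v = (if v \<in> V0 G then \<sigma> v else if v \<in> V1 G then \<tau> v else sink G)"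

definition reaches_sink :: "('v, 'm) spg_scheme \<Rightarrow> ('v \<Rightarrow> 'v) \<Rightarrow> ('v \<Rightarrow> 'v) \<Rightarrow> 'v \<Rightarrow> bool" where
  "reaches_sink G \<sigma> \<tau> v \<longleftrightarrow> (\<exists>k. (step G \<sigma> \<tau> ^^ k) v = sink G)"

definition play_val :: "('v, 'm) spg_scheme \<Rightarrow> ('v \<Rightarrow> 'v) \<Rightarrow> ('v \<Rightarrow> 'v) \<Rightarrow> 'v \<Rightarrow> int multiset" where
  "play_val G \<sigma> \<tau> v =
     (let k = (LEAST k. (step G \<sigma> \<tau> ^^ k) v = sink G)
      in mset (map (\<lambda>i. prio G ((step G \<sigma> \<tau> ^^ i) v)) [0..<k]))"

definition weight :: "('v, 'm) spg_scheme \<Rightarrow> int multiset \<Rightarrow> real" where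
  "weight G S = sum_mset (image_mset (\<lambda>s. (- real (card (V0 G \<union> V1 G))) powi s) S)"

definition mless :: "('v, 'm) spg_scheme \<Rightarrow> int multiset \<Rightarrow> int multiset \<Rightarrow> bool" where
  "mless G S1 S2 \<longleftrightarrow> weight G S1 < weight G S2"

definition counter_plays :: "('v, 'm) spg_scheme \<Rightarrow> ('v \<Rightarrow> 'v) \<Rightarrow> 'v \<Rightarrow> int multiset set" where
  "counter_plays G \<sigma> v = {play_val G \<sigma> \<tau> v | \<tau>. strategy1 G \<tau> \<and> reaches_sink G \<sigma> \<tau> v}"

definition val :: "('v, 'm) spg_scheme \<Rightarrow> ('v \<Rightarrow> 'v) \<Rightarrow> 'v \<Rightarrow> int multiset" where
  "val G \<sigma> v = (SOME S. S \<in> counter_plays G \<sigma> v \<and> (\<forall>S'\<in>counter_plays G \<sigma> v. \<not> mless G S' S))"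

definition improving_switch :: "('v, 'm) spg_scheme \<Rightarrow> ('v \<Rightarrow> 'v) \<Rightarrow> 'v \<Rightarrow> 'v \<Rightarrow> bool" where
  "improving_switch G \<sigma> v w \<longleftrightarrow> admissible G \<sigma> \<and> v \<in> V0 G \<and> (v, w) \<in> edges G \<and>
     mless G (val G \<sigma> (\<sigma> v)) (val G \<sigma> w)"

definition optimal :: "('v, 'm) spg_scheme \<Rightarrow> ('v \<Rightarrow> 'v) \<Rightarrow> bool" where
  "optimal G \<sigma> \<longleftrightarrow> \<not> (\<exists>v w. improving_switch G \<sigma> v w)"

definition bland_step :: "('v, 'm) spg_scheme \<Rightarrow> ('v \<times> 'v \<Rightarrow> nat) \<Rightarrow> ('v \<Rightarrow> 'v) \<Rightarrow> ('v \<Rightarrow> 'v) \<Rightarrow> bool" where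
  "bland_step G bl \<sigma> \<sigma>' \<longleftrightarrow>
     (\<exists>v w. improving_switch G \<sigma> v w \<and>
        (\<forall>v' w'. improving_switch G \<sigma> v' w' \<longrightarrow> bl (v, w) \<le> bl (v', w')) \<and>
        \<sigma>' = \<sigma>(v := w))"

definition bland_run :: "('v, 'm) spg_scheme \<Rightarrow> ('v \<times> 'v \<Rightarrow> nat) \<Rightarrow> ('v \<Rightarrow> 'v) \<Rightarrow> nat
    \<Rightarrow> (nat \<Rightarrow> 'v \<Rightarrow> 'v) \<Rightarrow> bool" where
  "bland_run G bl \<sigma>0 m \<sigma>s \<longleftrightarrow> \<sigma>s 0 = \<sigma>0 \<and> (\<forall>k\<le>m. admissible G (\<sigma>s k)) \<and>
     (\<forall>k<m. bland_step G bl (\<sigma>s k) (\<sigma>s (Suc k))) \<and> optimal G (\<sigma>s m)"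

datatype vtx = A nat | B nat | Top

definition an :: "nat \<Rightarrow> nat \<Rightarrow> vtx" where
  "an n i = (if i = Suc n then Top else A i)"

definition Gn :: "nat \<Rightarrow> vtx spg" where
  "Gn n = \<lparr> V0 = A ` {1..n}, V1 = B ` {1..Suc n}, sink = Top,
     edges = (\<Union>i\<in>{1..n}. {(A i, an n (Suc i)), (A i, B (Suc i)),
                            (B i, B (Suc i)), (B i, an n (Suc i))})
             \<union> {(B (Suc n), Top), (Top, Top)},
     prio = (\<lambda>v. case v of A i \<Rightarrow> 2 * int i + 1 | B i \<Rightarrow> 2 * int i + 2 | Top \<Rightarrow> 0) \<rparr>"

definition blandn :: "nat \<Rightarrow> vtx \<times> vtx \<Rightarrow> nat" where
  "blandn n e = (case e of (A i, w) \<Rightarrow> if w = B (Suc i) then 2 * i else 2 * i - 1 | _ \<Rightarrow> 0)"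

definition sigma0 :: "nat \<Rightarrow> vtx \<Rightarrow> vtx" where
  "sigma0 n v = (case v of A i \<Rightarrow> an n (Suc i) | _ \<Rightarrow> Top)"

end

theory Submission
  imports Defs
begin

text \<open>Weights of valuations are sums of powers of -(2n + 1), and the priorities 2i + 1 of a_i
  and 2i + 2 of b_i dominate everything that comes later on a play. Hence, for every strategy,
  val(a_i) exceeds val(b_i) iff an odd number of the a_j with j \<ge> i point to b_(j+1), and the
  switch at a_i is improving iff that number is even. If after k iterations the switched vertices
  encode the Gray code of k, this parity at a_i is bit i - 1 of k, so the improving switches sit at
  the zero bits of k; Bland's rule takes the lowest one, and applying it yields the strategy for
  k + 1. So the run passes through k = 0, ..., 2^n - 1, and the order of val(a_1) and val(b_1) is
  the parity of k.\<close>

lemma play_val_sink: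
  "reaches_sink G \<sigma> \<tau> (sink G)" "play_val G \<sigma> \<tau> (sink G) = {#}"
  unfolding reaches_sink_def play_val_def
  by (auto intro: exI[of _ 0] simp: Least_eq_0)

lemma play_val_step:
  assumes "v \<noteq> sink G" and "reaches_sink G \<sigma> \<tau> (step G \<sigma> \<tau> v)"
  shows "reaches_sink G \<sigma> \<tau> v"
    and "play_val G \<sigma> \<tau> v = add_mset (prio G v) (play_val G \<sigma> \<tau> (step G \<sigma> \<tau> v))"
proof -
  let ?f = "step G \<sigma> \<tau>"
  have shift: "(?f ^^ Suc m) v = (?f ^^ m) (?f v)" for m
    by (simp add: funpow_Suc_right del: funpow.simps)
  obtain k where k: "(?f ^^ k) (?f v) = sink G"
    using assms(2) unfolding reaches_sink_def by blast
  then show "reaches_sink G \<sigma> \<tau> v"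
    unfolding reaches_sink_def using shift by metis
  have "(LEAST k. (?f ^^ k) v = sink G) = Suc (LEAST m. (?f ^^ m) (?f v) = sink G)"
    using Least_Suc[of "\<lambda>k. (?f ^^ k) v = sink G" "Suc k"] k shift assms(1) by simp
  then show "play_val G \<sigma> \<tau> v = add_mset (prio G v) (play_val G \<sigma> \<tau> (?f v))"
    unfolding play_val_def Let_def by (simp only: map_upt_Suc shift) simp
qed

lemma weight_val_eq:
  assumes "S \<in> counter_plays G \<sigma> v"
    and "\<And>S'. S' \<in> counter_plays G \<sigma> v \<Longrightarrow> weight G S \<le> weight G S'"
  shows "weight G (val G \<sigma> v) = weight G S"
proof -
  have "\<exists>S. S \<in> counter_plays G \<sigma> v \<and> (\<forall>S'\<in>counter_plays G \<sigma> v. \<not> mless G S' S)"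
    using assms by (auto simp: mless_def not_less)
  then have "val G \<sigma> v \<in> counter_plays G \<sigma> v \<and> (\<forall>S'\<in>counter_plays G \<sigma> v. \<not> mless G S' (val G \<sigma> v))"
    unfolding val_def by (rule someI_ex)
  then show ?thesis
    using assms by (force simp: mless_def)
qed

lemma bland_step_iff_update:
  assumes "improving_switch G \<sigma> v w"
    and "\<And>v' w'. improving_switch G \<sigma> v' w' \<Longrightarrow> (v', w') \<noteq> (v, w) \<Longrightarrow> bl (v, w) < bl (v', w')"
  shows "bland_step G bl \<sigma> \<sigma>' \<longleftrightarrow> \<sigma>' = \<sigma>(v := w)"
proof
  assume "bland_step G bl \<sigma> \<sigma>'"
  then obtain v' w' where "improving_switch G \<sigma> v' w'" "bl (v', w') \<le> bl (v, w)"
    and "\<sigma>' = \<sigma>(v' := w')"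
    using assms(1) unfolding bland_step_def by blast
  then show "\<sigma>' = \<sigma>(v := w)"
    using assms(2) by (metis leD prod.inject)
next
  assume "\<sigma>' = \<sigma>(v := w)"
  then show "bland_step G bl \<sigma> \<sigma>'"
    unfolding bland_step_def using assms by (metis order.order_iff_strict)
qed

lemma bland_step_imp_not_optimal: "bland_step G bl \<sigma> \<sigma>' \<Longrightarrow> \<not> optimal G \<sigma>"
  unfolding bland_step_def optimal_def by blast

lemma V0_Gn: "V0 (Gn n) = A ` {1..n}"
  and V1_Gn: "V1 (Gn n) = B ` {1..Suc n}"
  and sink_Gn [simp]: "sink (Gn n) = Top"
  and prio_Gn_A: "prio (Gn n) (A i) = 2 * int i + 1"
  and prio_Gn_B: "prio (Gn n) (B i) = 2 * int i + 2"
  by (simp_all add: Gn_def)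

lemma an_eq_Top [simp]: "an n (Suc n) = Top"
  and an_eq_A [simp]: "i \<le> n \<Longrightarrow> an n i = A i"
  and an_neq_B [simp]: "an n i \<noteq> B j" "B j \<noteq> an n i"
  by (auto simp: an_def)

lemma edges_Gn_A:
  "(A i, w) \<in> edges (Gn n) \<longleftrightarrow> i \<in> {1..n} \<and> (w = an n (Suc i) \<or> w = B (Suc i))"
  by (auto simp: Gn_def an_def)

lemma edges_Gn_B:
  "(B i, w) \<in> edges (Gn n) \<longleftrightarrow>
     i \<in> {1..n} \<and> (w = B (Suc i) \<or> w = an n (Suc i)) \<or> i = Suc n \<and> w = Top"
  by (auto simp: Gn_def an_def)

lemma strategy0_Gn_iff:
  "strategy0 (Gn n) \<sigma> \<longleftrightarrow> (\<forall>i\<in>{1..n}. \<sigma> (A i) = an n (Suc i) \<or> \<sigma> (A i) = B (Suc i))"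
  by (auto simp: strategy0_def V0_Gn edges_Gn_A)

lemma strategy1_Gn_B:
  assumes "strategy1 (Gn n) \<tau>"
  shows "i \<in> {1..n} \<Longrightarrow> \<tau> (B i) = B (Suc i) \<or> \<tau> (B i) = an n (Suc i)"
    and "\<tau> (B (Suc n)) = Top"
  using assms by (force simp: strategy1_def V1_Gn edges_Gn_B)+

lemma step_Gn_A: "i \<in> {1..n} \<Longrightarrow> step (Gn n) \<sigma> \<tau> (A i) = \<sigma> (A i)"
  and step_Gn_B: "i \<in> {1..Suc n} \<Longrightarrow> step (Gn n) \<sigma> \<tau> (B i) = \<tau> (B i)"
  by (auto simp: step_def V0_Gn V1_Gn)

lemma card_vertices_Gn: "card (V0 (Gn n) \<union> V1 (Gn n)) = 2 * n + 1"
proof -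
  have "card (A ` {1..n} \<union> B ` {1..Suc n}) = card (A ` {1..n}) + card (B ` {1..Suc n})"
    by (rule card_Un_disjoint) auto
  also have "\<dots> = 2 * n + 1"
    by (simp add: card_image inj_on_def)
  finally show ?thesis
    by (simp add: V0_Gn V1_Gn)
qed

definition radix :: "nat \<Rightarrow> real" where
  "radix n = - real (2 * n + 1)"

lemma radix_power_odd: "radix n ^ (2 * i + 1) = - (real (2 * n + 1) ^ (2 * i + 1))"
  unfolding radix_def by (rule power_minus_odd) simp

lemma radix_power_even: "radix n ^ (2 * i + 2) = real (2 * n + 1) ^ (2 * i + 2)"
  unfolding radix_def by (rule power_minus_even) simp

lemma weight_Gn_empty: "weight (Gn n) {#} = 0"
  by (simp add: weight_def)

lemma weight_Gn_A: "weight (Gn n) (add_mset (prio (Gn n) (A i)) M) = radix n ^ (2 * i + 1) + weight (Gn n) M"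
  and weight_Gn_B: "weight (Gn n) (add_mset (prio (Gn n) (B i)) M) = radix n ^ (2 * i + 2) + weight (Gn n) M"
  by (simp_all add: weight_def card_vertices_Gn radix_def prio_Gn_A prio_Gn_B add.commute
      flip: power_int_of_nat)

text \<open>Every edge not touching the sink goes from layer i to layer i + 1, so the only cycle
  of the game is the loop at the sink and all player 0 strategies are admissible.\<close>

definition layer :: "vtx \<Rightarrow> nat" where
  "layer v = (case v of A i \<Rightarrow> i | B i \<Rightarrow> i | Top \<Rightarrow> 0)"

lemma layer_edge_Gn:
  "(v, w) \<in> edges (Gn n) \<Longrightarrow> v \<noteq> Top \<Longrightarrow> w \<noteq> Top \<Longrightarrow> layer w = Suc (layer v)"
  by (cases v) (auto simp: edges_Gn_A edges_Gn_B layer_def an_def split: if_splits)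

lemma admissible_Gn:
  assumes "strategy0 (Gn n) \<sigma>"
  shows "admissible (Gn n) \<sigma>"
  unfolding admissible_def
proof (intro conjI allI impI)
  fix xs
  assume cycle: "xs \<noteq> [] \<and> (\<forall>i<length xs. (xs ! i, xs ! (Suc i mod length xs)) \<in> E_sigma (Gn n) \<sigma>)
    \<and> sink (Gn n) \<notin> set xs"
  have "Max (layer ` set xs) \<in> layer ` set xs"
    using cycle by (intro Max_in) auto
  then obtain i where i: "i < length xs" "layer (xs ! i) = Max (layer ` set xs)"
    by (auto simp: in_set_conv_nth)
  let ?j = "Suc i mod length xs"
  have "(xs ! i, xs ! ?j) \<in> edges (Gn n)" "?j < length xs"
    using cycle i(1) by (auto simp: E_sigma_def)
  then have "layer (xs ! ?j) = Suc (Max (layer ` set xs))"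
    using cycle i layer_edge_Gn by (metis nth_mem sink_Gn)
  moreover have "layer (xs ! ?j) \<le> Max (layer ` set xs)"
    using \<open>?j < length xs\<close> by simp
  ultimately show "even (Max (prio (Gn n) ` set xs))"
    by simp
qed (fact assms)

section \<open>Valuations in G_n\<close>

lemma top_down_induct [consumes 1, case_names top step]:
  assumes "i \<in> {1..Suc n}" and "P (Suc n)" and "\<And>i. i \<in> {1..n} \<Longrightarrow> P (Suc i) \<Longrightarrow> P i"
  shows "P i"
proof -
  have "i \<le> Suc n" "1 \<le> i"
    using assms(1) by simp_all
  then show ?thesis
    by (induction rule: inc_induct) (auto intro: assms(2,3))
qed

text \<open>The weights of val(a_i) and val(b_i), computed downwards from layer n + 1, where
  a_(n+1) is the sink and b_(n+1) moves to it.\<close>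

function opt_weights :: "nat \<Rightarrow> (vtx \<Rightarrow> vtx) \<Rightarrow> nat \<Rightarrow> real \<times> real" where
  "opt_weights n \<sigma> i =
     (if n < i then (0, radix n ^ (2 * Suc n + 2))
      else let (a, b) = opt_weights n \<sigma> (Suc i)
        in (radix n ^ (2 * i + 1) + (if \<sigma> (A i) = B (Suc i) then b else a),
            radix n ^ (2 * i + 2) + min a b))"
  by pat_completeness auto
termination by (relation "measure (\<lambda>(n, \<sigma>, i). Suc n - i)") auto

declare opt_weights.simps [simp del]

lemma opt_weights_top: "opt_weights n \<sigma> (Suc n) = (0, radix n ^ (2 * Suc n + 2))"
  by (simp add: opt_weights.simps)

lemma opt_weights_step:
  assumes "i \<le> n" and "opt_weights n \<sigma> (Suc i) = (a, b)"
  shows "opt_weights n \<sigma> i =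
    (radix n ^ (2 * i + 1) + (if \<sigma> (A i) = B (Suc i) then b else a), radix n ^ (2 * i + 2) + min a b)"
  using assms by (subst opt_weights.simps) simp

function switch_parity :: "nat \<Rightarrow> (vtx \<Rightarrow> vtx) \<Rightarrow> nat \<Rightarrow> bool" where
  "switch_parity n \<sigma> i = (if n < i then False else (\<sigma> (A i) = B (Suc i)) \<noteq> switch_parity n \<sigma> (Suc i))"
  by pat_completeness auto
termination by (relation "measure (\<lambda>(n, \<sigma>, i). Suc n - i)") auto

declare switch_parity.simps [simp del]

lemma switch_parity_top: "n < i \<Longrightarrow> \<not> switch_parity n \<sigma> i"
  and switch_parity_step:
    "i \<le> n \<Longrightarrow> switch_parity n \<sigma> i \<longleftrightarrow> (\<sigma> (A i) = B (Suc i)) \<noteq> switch_parity n \<sigma> (Suc i)"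
  by (simp_all add: switch_parity.simps)

lemma play_val_Gn_top:
  assumes "strategy1 (Gn n) \<tau>"
  shows "reaches_sink (Gn n) \<sigma> \<tau> (an n (Suc n))"
    and "weight (Gn n) (play_val (Gn n) \<sigma> \<tau> (an n (Suc n))) = fst (opt_weights n \<sigma> (Suc n))"
    and "reaches_sink (Gn n) \<sigma> \<tau> (B (Suc n))"
    and "weight (Gn n) (play_val (Gn n) \<sigma> \<tau> (B (Suc n))) = snd (opt_weights n \<sigma> (Suc n))"
proof -
  note sink = play_val_sink[of "Gn n" \<sigma> \<tau>]
  then show "reaches_sink (Gn n) \<sigma> \<tau> (an n (Suc n))"
    and "weight (Gn n) (play_val (Gn n) \<sigma> \<tau> (an n (Suc n))) = fst (opt_weights n \<sigma> (Suc n))"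
    by (simp_all add: weight_Gn_empty opt_weights_top)
  have "step (Gn n) \<sigma> \<tau> (B (Suc n)) = Top"
    using assms by (simp add: step_Gn_B strategy1_Gn_B)
  then show "reaches_sink (Gn n) \<sigma> \<tau> (B (Suc n))"
    and "weight (Gn n) (play_val (Gn n) \<sigma> \<tau> (B (Suc n))) = snd (opt_weights n \<sigma> (Suc n))"
    using play_val_step[of "B (Suc n)" "Gn n" \<sigma> \<tau>] sink
    by (simp_all add: weight_Gn_B[of n "Suc n" "{#}", unfolded weight_Gn_empty] opt_weights_top)
qed

lemma play_weights_ge:
  assumes \<sigma>: "strategy0 (Gn n) \<sigma>" and \<tau>: "strategy1 (Gn n) \<tau>" and "i \<in> {1..Suc n}"
  shows "reaches_sink (Gn n) \<sigma> \<tau> (an n i)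
      \<and> fst (opt_weights n \<sigma> i) \<le> weight (Gn n) (play_val (Gn n) \<sigma> \<tau> (an n i))
      \<and> reaches_sink (Gn n) \<sigma> \<tau> (B i)
      \<and> snd (opt_weights n \<sigma> i) \<le> weight (Gn n) (play_val (Gn n) \<sigma> \<tau> (B i))"
  using \<open>i \<in> {1..Suc n}\<close>
proof (induction i rule: top_down_induct)
  case top
  then show ?case
    using play_val_Gn_top[OF \<tau>, of \<sigma>] by simp
next
  case (step i)
  note i = \<open>i \<in> {1..n}\<close>
  obtain a b where ab: "opt_weights n \<sigma> (Suc i) = (a, b)"
    by fastforce
  have "\<sigma> (A i) \<in> {an n (Suc i), B (Suc i)}" "\<tau> (B i) \<in> {an n (Suc i), B (Suc i)}"
    using \<sigma> strategy1_Gn_B(1)[OF \<tau> i] i by (auto simp: strategy0_Gn_iff)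
  then have "reaches_sink (Gn n) \<sigma> \<tau> (\<sigma> (A i))" "reaches_sink (Gn n) \<sigma> \<tau> (\<tau> (B i))"
    and "(if \<sigma> (A i) = B (Suc i) then b else a) \<le> weight (Gn n) (play_val (Gn n) \<sigma> \<tau> (\<sigma> (A i)))"
    and "min a b \<le> weight (Gn n) (play_val (Gn n) \<sigma> \<tau> (\<tau> (B i)))"
    using step.IH ab by auto
  moreover note play_val_step[of "A i" "Gn n" \<sigma> \<tau>] play_val_step[of "B i" "Gn n" \<sigma> \<tau>]
  ultimately show ?case
    using i by (simp add: step_Gn_A step_Gn_B opt_weights_step[OF _ ab] weight_Gn_A weight_Gn_B)
qed

definition best_response :: "nat \<Rightarrow> (vtx \<Rightarrow> vtx) \<Rightarrow> vtx \<Rightarrow> vtx" where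
  "best_response n \<sigma> v = (case v of
      B i \<Rightarrow> if n < i then Top
        else if fst (opt_weights n \<sigma> (Suc i)) < snd (opt_weights n \<sigma> (Suc i)) then an n (Suc i)
        else B (Suc i)
    | _ \<Rightarrow> Top)"

lemma strategy1_best_response: "strategy1 (Gn n) (best_response n \<sigma>)"
  by (auto simp: strategy1_def V1_Gn edges_Gn_B best_response_def)

lemma play_weights_best_response:
  assumes \<sigma>: "strategy0 (Gn n) \<sigma>" and "i \<in> {1..Suc n}"
  shows "weight (Gn n) (play_val (Gn n) \<sigma> (best_response n \<sigma>) (an n i)) = fst (opt_weights n \<sigma> i)
     \<and> weight (Gn n) (play_val (Gn n) \<sigma> (best_response n \<sigma>) (B i)) = snd (opt_weights n \<sigma> i)"
  using \<open>i \<in> {1..Suc n}\<close>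
proof (induction i rule: top_down_induct)
  case top
  then show ?case
    using play_val_Gn_top[OF strategy1_best_response, of n \<sigma>] by simp
next
  case (step i)
  note i = \<open>i \<in> {1..n}\<close>
  let ?\<tau> = "best_response n \<sigma>"
  obtain a b where ab: "opt_weights n \<sigma> (Suc i) = (a, b)"
    by fastforce
  have \<tau>: "?\<tau> (B i) = (if a < b then an n (Suc i) else B (Suc i))"
    using i ab by (simp add: best_response_def)
  have "\<sigma> (A i) \<in> {an n (Suc i), B (Suc i)}"
    using \<sigma> i by (auto simp: strategy0_Gn_iff)
  then have "reaches_sink (Gn n) \<sigma> ?\<tau> (\<sigma> (A i))" "reaches_sink (Gn n) \<sigma> ?\<tau> (?\<tau> (B i))"
    and "weight (Gn n) (play_val (Gn n) \<sigma> ?\<tau> (\<sigma> (A i))) = (if \<sigma> (A i) = B (Suc i) then b else a)"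
    and "weight (Gn n) (play_val (Gn n) \<sigma> ?\<tau> (?\<tau> (B i))) = min a b"
    using step.IH ab \<tau> i play_weights_ge[OF \<sigma> strategy1_best_response, of "Suc i"]
    by auto
  moreover note play_val_step[of "A i" "Gn n" \<sigma> ?\<tau>] play_val_step[of "B i" "Gn n" \<sigma> ?\<tau>]
  ultimately show ?case
    using i by (simp add: step_Gn_A step_Gn_B opt_weights_step[OF _ ab] weight_Gn_A weight_Gn_B)
qed

lemma weight_val_Gn:
  assumes \<sigma>: "strategy0 (Gn n) \<sigma>" and i: "i \<in> {1..Suc n}"
  shows "weight (Gn n) (val (Gn n) \<sigma> (an n i)) = fst (opt_weights n \<sigma> i)"
    and "weight (Gn n) (val (Gn n) \<sigma> (B i)) = snd (opt_weights n \<sigma> i)"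
proof -
  let ?\<tau> = "best_response n \<sigma>"
  note ge = play_weights_ge[OF \<sigma> _ i]
  note eq = play_weights_best_response[OF \<sigma> i]
  have "weight (Gn n) (val (Gn n) \<sigma> (an n i)) = weight (Gn n) (play_val (Gn n) \<sigma> ?\<tau> (an n i))"
    using ge eq strategy1_best_response by (intro weight_val_eq) (force simp: counter_plays_def)+
  then show "weight (Gn n) (val (Gn n) \<sigma> (an n i)) = fst (opt_weights n \<sigma> i)"
    using eq by simp
  have "weight (Gn n) (val (Gn n) \<sigma> (B i)) = weight (Gn n) (play_val (Gn n) \<sigma> ?\<tau> (B i))"
    using ge eq strategy1_best_response by (intro weight_val_eq) (force simp: counter_plays_def)+
  then show "weight (Gn n) (val (Gn n) \<sigma> (B i)) = snd (opt_weights n \<sigma> i)"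
    using eq by simp
qed

lemma two_mult_add_one_le_cube: "3 \<le> (x::real) \<Longrightarrow> 2 * x + 1 \<le> x ^ 3"
proof -
  assume "3 \<le> x"
  then have "3 * 3 * x \<le> x * x * x"
    by (intro mult_right_mono mult_mono) auto
  then show ?thesis
    unfolding power3_eq_cube using \<open>3 \<le> x\<close> by linarith
qed

lemma opt_weights_gap:
  assumes "i \<in> {1..Suc n}"
  shows "real (2 * n + 1) ^ (2 * i + 2) \<le> \<bar>fst (opt_weights n \<sigma> i) - snd (opt_weights n \<sigma> i)\<bar>
    \<and> (snd (opt_weights n \<sigma> i) < fst (opt_weights n \<sigma> i) \<longleftrightarrow> switch_parity n \<sigma> i)"
  using assms
proof (induction i rule: top_down_induct)
  case top
  have "0 < real (2 * n + 1) ^ (2 * Suc n + 2)"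
    by simp
  then show ?case
    by (simp only: opt_weights_top fst_conv snd_conv radix_power_even switch_parity_top[OF lessI]
        diff_0 abs_minus_cancel abs_of_pos) (metis less_asym order_refl)
next
  case (step i)
  define N where "N = real (2 * n + 1)"
  define t where "t = N ^ (2 * i + 1)"
  obtain a b where ab: "opt_weights n \<sigma> (Suc i) = (a, b)"
    by fastforce
  have "3 \<le> N" "0 < t"
    using step.hyps by (simp_all add: N_def t_def)
  then have "(2 * N + 1) * t \<le> N ^ 3 * t" "0 < N * t"
    using two_mult_add_one_le_cube by (simp_all add: mult_right_mono)
  \<comment> \<open>the gap at layer i + 1 outweighs the priorities of layer i\<close>
  then have dominant: "2 * (N * t) + t \<le> N ^ 3 * t"
    by (simp add: algebra_simps)
  have "2 * Suc i + 2 = 3 + (2 * i + 1)"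
    by simp
  then have "N ^ (2 * Suc i + 2) = N ^ 3 * t"
    unfolding t_def by (simp only: power_add)
  then have IH: "N ^ 3 * t \<le> \<bar>a - b\<bar>" "b < a \<longleftrightarrow> switch_parity n \<sigma> (Suc i)"
    using step.IH ab by (simp_all add: N_def)
  have gap: "real (2 * n + 1) ^ (2 * i + 2) = N * t"
    by (simp add: N_def t_def)
  have "radix n ^ (2 * i + 1) = - t" "radix n ^ (2 * i + 2) = N * t"
    unfolding radix_power_odd radix_power_even gap by (simp_all add: N_def t_def)
  then have "fst (opt_weights n \<sigma> i) = - t + (if \<sigma> (A i) = B (Suc i) then b else a)"
    and "snd (opt_weights n \<sigma> i) = N * t + min a b"
    using step.hyps by (simp_all only: opt_weights_step[OF _ ab] fst_conv snd_conv atLeastAtMost_iff)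
  moreover have "switch_parity n \<sigma> i \<longleftrightarrow> (\<sigma> (A i) = B (Suc i)) \<noteq> (b < a)"
    using step.hyps IH(2) by (simp add: switch_parity_step)
  ultimately show ?case
    unfolding gap using IH(1) dominant \<open>0 < t\<close> \<open>0 < N * t\<close>
    by (auto simp: min_def abs_if split: if_splits)
qed

lemma mless_val_Gn:
  assumes "strategy0 (Gn n) \<sigma>" and "i \<in> {1..Suc n}"
  shows "mless (Gn n) (val (Gn n) \<sigma> (B i)) (val (Gn n) \<sigma> (an n i)) \<longleftrightarrow> switch_parity n \<sigma> i"
    and "mless (Gn n) (val (Gn n) \<sigma> (an n i)) (val (Gn n) \<sigma> (B i)) \<longleftrightarrow> \<not> switch_parity n \<sigma> i"
proof -
  note gap = opt_weights_gap[OF assms(2), of \<sigma>]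
  have "0 < real (2 * n + 1) ^ (2 * i + 2)"
    by simp
  then have "fst (opt_weights n \<sigma> i) \<noteq> snd (opt_weights n \<sigma> i)"
    using gap[THEN conjunct1] by (metis abs_0 diff_self leD)
  then show "mless (Gn n) (val (Gn n) \<sigma> (B i)) (val (Gn n) \<sigma> (an n i)) \<longleftrightarrow> switch_parity n \<sigma> i"
    and "mless (Gn n) (val (Gn n) \<sigma> (an n i)) (val (Gn n) \<sigma> (B i)) \<longleftrightarrow> \<not> switch_parity n \<sigma> i"
    using gap unfolding mless_def weight_val_Gn[OF assms] by auto
qed

definition other_succ :: "nat \<Rightarrow> (vtx \<Rightarrow> vtx) \<Rightarrow> nat \<Rightarrow> vtx" where
  "other_succ n \<sigma> i = (if \<sigma> (A i) = B (Suc i) then an n (Suc i) else B (Suc i))"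

lemma improving_switch_Gn_iff:
  assumes \<sigma>: "strategy0 (Gn n) \<sigma>"
  shows "improving_switch (Gn n) \<sigma> v w \<longleftrightarrow>
    (\<exists>i\<in>{1..n}. v = A i \<and> w = other_succ n \<sigma> i \<and> \<not> switch_parity n \<sigma> i)"
proof -
  have "improving_switch (Gn n) \<sigma> (A i) w \<longleftrightarrow> w = other_succ n \<sigma> i \<and> \<not> switch_parity n \<sigma> i"
    if i: "i \<in> {1..n}" for i
  proof -
    have "Suc i \<in> {1..Suc n}"
      using i by simp
    note succ = mless_val_Gn[OF \<sigma> this]
    have "\<sigma> (A i) \<in> {an n (Suc i), B (Suc i)}"
      using \<sigma> i by (auto simp: strategy0_Gn_iff)
    then show ?thesis
      using i succ mless_def[of "Gn n"]
      by (auto simp: improving_switch_def admissible_Gn[OF \<sigma>] V0_Gn edges_Gn_A other_succ_def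
          switch_parity_step)
  qed
  moreover have "\<not> improving_switch (Gn n) \<sigma> v w" if "\<forall>i\<in>{1..n}. v \<noteq> A i"
    using that by (auto simp: improving_switch_def V0_Gn)
  ultimately show ?thesis
    by blast
qed

section \<open>The binary counter\<close>

lemma not_bit_nat_if_less_exp: "(k::nat) < 2 ^ n \<Longrightarrow> n \<le> j \<Longrightarrow> \<not> bit k j"
  by (metis bit_take_bit_iff take_bit_nat_eq_self not_le)

lemma bit_exp_minus_1_nat_iff: "bit ((2::nat) ^ n - 1) j \<longleftrightarrow> j < n"
  using bit_mask_iff[of n j, where 'a=nat] by (simp add: mask_eq_exp_minus_1)

lemma bit_Suc_nat_trailing_ones:
  fixes k :: nat
  assumes "\<forall>j<t. bit k j" and "\<not> bit k t"
  shows "bit (Suc k) j \<longleftrightarrow> j = t \<or> t < j \<and> bit k j"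
  using assms
proof (induction t arbitrary: k j)
  case 0
  then have "even k"
    by (simp add: bit_0)
  moreover have "Suc k div 2 = k div 2" if "even k"
    using that by presburger
  ultimately show ?case
    by (cases j) (simp_all add: bit_0 bit_Suc)
next
  case (Suc t)
  then have "odd k" "\<forall>j<t. bit (k div 2) j" "\<not> bit (k div 2) t"
    by (auto simp: bit_0 bit_Suc[symmetric])
  moreover have "Suc k div 2 = Suc (k div 2)" if "odd k"
    using that by presburger
  ultimately show ?case
    using Suc.IH by (cases j) (simp_all add: bit_0 bit_Suc)
qed

lemma exists_zero_bit_below:
  fixes k :: nat
  assumes "k < 2 ^ n - 1"
  shows "\<exists>j<n. \<not> bit k j"
proof (rule ccontr)
  assume "\<not> (\<exists>j<n. \<not> bit k j)"
  then have "k = 2 ^ n - 1"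
    using assms not_bit_nat_if_less_exp[of k n] bit_exp_minus_1_nat_iff[of n]
    by (intro bit_eqI) (meson diff_le_self leI order_less_le_trans)
  then show False
    using assms by simp
qed

text \<open>The strategy after k iterations: a_i points to b_(i+1) iff bit i - 1 of the Gray code
  of k is set.\<close>

definition counter_strategy :: "nat \<Rightarrow> nat \<Rightarrow> vtx \<Rightarrow> vtx" where
  "counter_strategy n k v = (case v of
      A i \<Rightarrow> if i \<in> {1..n} \<and> bit k (i - 1) \<noteq> bit k i then B (Suc i) else an n (Suc i)
    | _ \<Rightarrow> Top)"

lemma counter_strategy_0: "counter_strategy n 0 = sigma0 n"
  by (auto simp: counter_strategy_def sigma0_def split: vtx.split)

lemma strategy0_counter_strategy: "strategy0 (Gn n) (counter_strategy n k)"
  by (simp add: strategy0_Gn_iff counter_strategy_def)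

lemma switch_parity_counter_strategy:
  assumes "k < 2 ^ n" and "i \<in> {1..Suc n}"
  shows "switch_parity n (counter_strategy n k) i \<longleftrightarrow> bit k (i - 1)"
  using assms(2)
proof (induction i rule: top_down_induct)
  case top
  then show ?case
    using not_bit_nat_if_less_exp[OF assms(1)] by (simp add: switch_parity_top)
next
  case (step i)
  then show ?case
    by (auto simp: switch_parity_step counter_strategy_def)
qed

lemma improving_switch_counter_strategy_iff:
  assumes "k < 2 ^ n"
  shows "improving_switch (Gn n) (counter_strategy n k) v w \<longleftrightarrow>
    (\<exists>i\<in>{1..n}. v = A i \<and> w = other_succ n (counter_strategy n k) i \<and> \<not> bit k (i - 1))"
  unfolding improving_switch_Gn_iff[OF strategy0_counter_strategy]
  using switch_parity_counter_strategy[OF assms] by auto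

lemma counter_strategy_Suc:
  assumes "\<forall>j<t. bit k j" and "\<not> bit k t" and "t < n"
  shows "(counter_strategy n k)(A (Suc t) := other_succ n (counter_strategy n k) (Suc t))
    = counter_strategy n (Suc k)"
proof
  fix v
  note bits = bit_Suc_nat_trailing_ones[OF assms(1,2)]
  show "((counter_strategy n k)(A (Suc t) := other_succ n (counter_strategy n k) (Suc t))) v
    = counter_strategy n (Suc k) v"
  proof (cases v)
    case (A i)
    have "bit k (i - 1) \<noteq> bit k i \<longleftrightarrow> bit (Suc k) (i - 1) \<noteq> bit (Suc k) i" if "i \<noteq> Suc t" "1 \<le> i"
      using bits assms(1,2) that by (cases "i < t"; cases "i = t") auto
    then show ?thesis
      using A bits assms by (auto simp: counter_strategy_def other_succ_def)
  qed (simp_all add: counter_strategy_def)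
qed

lemma blandn_less: "i < j \<Longrightarrow> blandn n (A i, w) < blandn n (A j, w')"
  by (auto simp: blandn_def)

lemma bland_step_counter_strategy:
  assumes "k < 2 ^ n - 1"
  shows "bland_step (Gn n) (blandn n) (counter_strategy n k) \<sigma>' \<longleftrightarrow> \<sigma>' = counter_strategy n (Suc k)"
proof -
  let ?\<sigma> = "counter_strategy n k"
  define t where "t = (LEAST j. \<not> bit k j)"
  obtain j where "j < n" "\<not> bit k j"
    using exists_zero_bit_below[OF assms] by blast
  then have t: "t < n" "\<not> bit k t" "\<forall>j<t. bit k j"
    unfolding t_def using Least_le[of "\<lambda>j. \<not> bit k j" j] LeastI[of "\<lambda>j. \<not> bit k j" j] not_less_Least
    by fastforce+
  have k: "k < 2 ^ n"
    using assms by simp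
  have "improving_switch (Gn n) ?\<sigma> (A (Suc t)) (other_succ n ?\<sigma> (Suc t))"
    unfolding improving_switch_counter_strategy_iff[OF k] using t by auto
  moreover have "blandn n (A (Suc t), other_succ n ?\<sigma> (Suc t)) < blandn n (v, w)"
    if switch: "improving_switch (Gn n) ?\<sigma> v w"
      and other: "(v, w) \<noteq> (A (Suc t), other_succ n ?\<sigma> (Suc t))" for v w
  proof -
    obtain i where i: "i \<in> {1..n}" "v = A i" "w = other_succ n ?\<sigma> i" "\<not> bit k (i - 1)"
      using switch unfolding improving_switch_counter_strategy_iff[OF k] by blast
    have "t \<le> i - 1"
      unfolding t_def using i(4) by (rule Least_le)
    then have "Suc t < i"
      using i other by auto
    then show ?thesis
      unfolding i(2) by (rule blandn_less)
  qed
  ultimately have "bland_step (Gn n) (blandn n) ?\<sigma> \<sigma>' \<longleftrightarrow>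
      \<sigma>' = ?\<sigma>(A (Suc t) := other_succ n ?\<sigma> (Suc t))"
    by (rule bland_step_iff_update)
  then show ?thesis
    unfolding counter_strategy_Suc[OF t(3,2,1)] .
qed

lemma optimal_counter_strategy: "optimal (Gn n) (counter_strategy n (2 ^ n - 1))"
  unfolding optimal_def
proof (intro notI, elim exE)
  fix v w
  assume switch: "improving_switch (Gn n) (counter_strategy n (2 ^ n - 1)) v w"
  have k: "(2::nat) ^ n - 1 < 2 ^ n"
    by simp
  obtain i where "i \<in> {1..n}" and zero: "\<not> bit ((2::nat) ^ n - 1) (i - 1)"
    using switch[unfolded improving_switch_counter_strategy_iff[OF k]] by blast
  then have "i - 1 < n"
    by auto
  then show False
    using zero bit_exp_minus_1_nat_iff by blast
qed

lemma bland_run_counter_strategy: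
  "bland_run (Gn n) (blandn n) (sigma0 n) (2 ^ n - 1) (counter_strategy n)"
  unfolding bland_run_def
  using counter_strategy_0 admissible_Gn[OF strategy0_counter_strategy] bland_step_counter_strategy
    optimal_counter_strategy
  by simp

lemma bland_run_Gn_eq_counter_strategy:
  assumes "bland_run (Gn n) (blandn n) (sigma0 n) m \<sigma>s" and "k \<le> m" and "k \<le> 2 ^ n - 1"
  shows "\<sigma>s k = counter_strategy n k"
  using assms(2,3)
proof (induction k)
  case 0
  then show ?case
    using assms(1) counter_strategy_0 by (simp add: bland_run_def)
next
  case (Suc k)
  then have "k < m"
    by simp
  then have "bland_step (Gn n) (blandn n) (\<sigma>s k) (\<sigma>s (Suc k))"
    using assms(1) unfolding bland_run_def by blast
  then show ?case
    using Suc bland_step_counter_strategy by simp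
qed

lemma bland_run_Gn_length:
  assumes run: "bland_run (Gn n) (blandn n) (sigma0 n) m \<sigma>s"
  shows "m = 2 ^ n - 1"
proof (rule ccontr)
  assume "m \<noteq> 2 ^ n - 1"
  then consider "m < 2 ^ n - 1" | "2 ^ n - 1 < m"
    by linarith
  then show False
  proof cases
    case 1
    then have "bland_step (Gn n) (blandn n) (\<sigma>s m) (counter_strategy n (Suc m))"
      using bland_run_Gn_eq_counter_strategy[OF run, of m] bland_step_counter_strategy by simp
    then show False
      using run bland_step_imp_not_optimal by (auto simp: bland_run_def)
  next
    case 2
    then have "bland_step (Gn n) (blandn n) (\<sigma>s (2 ^ n - 1)) (\<sigma>s (Suc (2 ^ n - 1)))"
      using run unfolding bland_run_def by blast
    then show False
      using 2 bland_run_Gn_eq_counter_strategy[OF run, of "2 ^ n - 1"] optimal_counter_strategy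
        bland_step_imp_not_optimal by fastforce
  qed
qed

lemma mless_val_counter_strategy:
  assumes "k < 2 ^ n"
  shows "mless (Gn n) (val (Gn n) (counter_strategy n k) (B 1)) (val (Gn n) (counter_strategy n k) (an n 1))
      \<longleftrightarrow> odd k"
    and "mless (Gn n) (val (Gn n) (counter_strategy n k) (an n 1)) (val (Gn n) (counter_strategy n k) (B 1))
      \<longleftrightarrow> even k"
  using mless_val_Gn[OF strategy0_counter_strategy, of 1] switch_parity_counter_strategy[OF assms, of 1]
  by (simp_all add: bit_0)

lemma mless_val_counter_strategy_alternates:
  assumes "k < 2 ^ n - 1"
  shows "(mless (Gn n) (val (Gn n) (counter_strategy n k) (an n 1)) (val (Gn n) (counter_strategy n k) (B 1)) \<and>
      mless (Gn n) (val (Gn n) (counter_strategy n (Suc k)) (B 1)) (val (Gn n) (counter_strategy n (Suc k)) (an n 1)))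
    \<or> (mless (Gn n) (val (Gn n) (counter_strategy n k) (B 1)) (val (Gn n) (counter_strategy n k) (an n 1)) \<and>
      mless (Gn n) (val (Gn n) (counter_strategy n (Suc k)) (an n 1)) (val (Gn n) (counter_strategy n (Suc k)) (B 1)))"
proof -
  have "k < 2 ^ n" "Suc k < 2 ^ n"
    using assms by simp_all
  then show ?thesis
    unfolding mless_val_counter_strategy[OF \<open>k < 2 ^ n\<close>] mless_val_counter_strategy[OF \<open>Suc k < 2 ^ n\<close>]
    by simp
qed

theorem lemma15:
  fixes n :: nat
  shows "(\<exists>\<sigma>s. bland_run (Gn n) (blandn n) (sigma0 n) (2 ^ n - 1) \<sigma>s \<and>
            (\<forall>k < 2 ^ n - 1.
               (mless (Gn n) (val (Gn n) (\<sigma>s k) (an n 1)) (val (Gn n) (\<sigma>s k) (B 1)) \<and>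
                mless (Gn n) (val (Gn n) (\<sigma>s (Suc k)) (B 1)) (val (Gn n) (\<sigma>s (Suc k)) (an n 1)))
             \<or> (mless (Gn n) (val (Gn n) (\<sigma>s k) (B 1)) (val (Gn n) (\<sigma>s k) (an n 1)) \<and>
                mless (Gn n) (val (Gn n) (\<sigma>s (Suc k)) (an n 1)) (val (Gn n) (\<sigma>s (Suc k)) (B 1)))))
         \<and> (\<forall>m \<sigma>s. bland_run (Gn n) (blandn n) (sigma0 n) m \<sigma>s \<longrightarrow> m = 2 ^ n - 1)"
  using bland_run_counter_strategy mless_val_counter_strategy_alternates bland_run_Gn_length by blast

end
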